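(* In the two-parallel-path setting with the linear decision rule, suppose $l_v=0$ for all vertices, $m<n$, all initial pheromone levels are positive, the inputs $f_s(t),b_d(t)$ are positive and non-decreasing in $t$, and the initial flows at vertices other than $s,d$ satisfy $f_v(0)\le f_s(0)$, $b_v(0)\le b_d(0)$. Let $T_1=\max_{(u,v)\in E}\log(p_{uv}(0)/(f_s(0)+b_d(0)))/\log(1/\delta)$. Then for every integer $t\ge L+\max(0,T_1)$, $$r_{ss_1}(t+1)\ \ge\ r_{\min}(t)\left(1+\frac{(1-\delta)\big(b_d(t-m+1)-b_d(t-n+1)\big)}{6\big(f_s(t)+b_d(t)\big)}\right).$$
   Context: Model (linear decision rule). Directed graph $G=(V,E)$, source $s$, destination $d$, discrete time; pheromone $p_{uv}(t)$, forward flows $f_v(t)$, backward flows $b_v(t)$; leakages $l_v\in[0,1]$; decay $\delta\in(0,1)$; exogenous inputs $f_s(t),b_d(t)$. Edge flows: $f_{uv}(t)=f_u(t)p_{uv}(t)/\sum_{z:(u,z)\in E}p_{uz}(t)$, $b_{uv}(t)=b_v(t)p_{uv}(t)/\sum_{z:(z,v)\in E}p_{zv}(t)$ (at a vertex with a single outgoing, resp. incoming, edge the whole flow goes along it). Updates: $f_v(t+1)=(1-l_v)\sum_{z:(z,v)\in E}f_{zv}(t)$ for $v\neq s$, $b_u(t+1)=(1-l_u)\sum_{z:(u,z)\in E}b_{uz}(t)$ for $u\ne d$, $p_{uv}(t+1)=\delta(p_{uv}(t)+f_{uv}(t)+b_{uv}(t))$. Two parallel paths: $G$ is the union of directed paths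 $P_1,P_2$ from $s$ to $d$ sharing only $s,d$; $s_1,s_2$ are the successors of $s$ and $d_1,d_2$ the predecessors of $d$ on $P_1,P_2$; $m=\mathrm{len}(P_1)$, $n=\mathrm{len}(P_2)$ (numbers of edges), $L=\max(m,n)$. Potential: $r_{ss_1}(t)=p_{ss_1}(t)/p_{ss_2}(t)$, $r_{d_1d}(t)=p_{d_1d}(t)/p_{d_2d}(t)$, and for $t\ge L$, $r_{\min}(t)=\min\{r_{ss_1}(t-i),\,r_{d_1d}(t-i):0\le i\le L-1\}$. *)

theory Defs
  imports Complex_Main
begin

text \<open>Trajectories: p t u v (pheromone on edge (u,v)), f t v (forward flow), b t v (backward flow).
  The exogenous inputs are f t s and b t d.\<close>

definition fflow :: "('v \<times> 'v) set \<Rightarrow> (nat \<Rightarrow> 'v \<Rightarrow> 'v \<Rightarrow> real) \<Rightarrow> (nat \<Rightarrow> 'v \<Rightarrow> real)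
    \<Rightarrow> nat \<Rightarrow> 'v \<Rightarrow> 'v \<Rightarrow> real" where
  "fflow E p f t u v = f t u * p t u v / (\<Sum>z\<in>{z. (u,z) \<in> E}. p t u z)"

definition bflow :: "('v \<times> 'v) set \<Rightarrow> (nat \<Rightarrow> 'v \<Rightarrow> 'v \<Rightarrow> real) \<Rightarrow> (nat \<Rightarrow> 'v \<Rightarrow> real)
    \<Rightarrow> nat \<Rightarrow> 'v \<Rightarrow> 'v \<Rightarrow> real" where
  "bflow E p b t u v = b t v * p t u v / (\<Sum>z\<in>{z. (z,v) \<in> E}. p t z v)"

definition ant_dynamics :: "('v \<times> 'v) set \<Rightarrow> 'v \<Rightarrow> 'v \<Rightarrow> ('v \<Rightarrow> real) \<Rightarrow> real
    \<Rightarrow> (nat \<Rightarrow> 'v \<Rightarrow> real) \<Rightarrow> (nat \<Rightarrow> 'v \<Rightarrow> real) \<Rightarrow> (nat \<Rightarrow> 'v \<Rightarrow> 'v \<Rightarrow> real) \<Rightarrow> bool" where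
  "ant_dynamics E s d l \<delta> f b p \<longleftrightarrow>
     (\<forall>t v. v \<noteq> s \<longrightarrow> f (Suc t) v = (1 - l v) * (\<Sum>z\<in>{z. (z,v) \<in> E}. fflow E p f t z v)) \<and>
     (\<forall>t u. u \<noteq> d \<longrightarrow> b (Suc t) u = (1 - l u) * (\<Sum>z\<in>{z. (u,z) \<in> E}. bflow E p b t u z)) \<and>
     (\<forall>t u v. (u,v) \<in> E \<longrightarrow>
        p (Suc t) u v = \<delta> * (p t u v + fflow E p f t u v + bflow E p b t u v))"

definition path_edges :: "'v list \<Rightarrow> ('v \<times> 'v) set" where
  "path_edges P = set (zip P (tl P))"

definition two_parallel_paths :: "('v \<times> 'v) set \<Rightarrow> 'v \<Rightarrow> 'v \<Rightarrow> 'v list \<Rightarrow> 'v list \<Rightarrow> bool" where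
  "two_parallel_paths E s d P1 P2 \<longleftrightarrow>
     s \<noteq> d \<and> distinct P1 \<and> distinct P2 \<and>
     P1 \<noteq> [] \<and> P2 \<noteq> [] \<and>
     hd P1 = s \<and> last P1 = d \<and> hd P2 = s \<and> last P2 = d \<and>
     set P1 \<inter> set P2 = {s, d} \<and>
     E = path_edges P1 \<union> path_edges P2"

text \<open>Potential. m = length P1 - 1, n = length P2 - 1 (numbers of edges).
  s_i = P_i ! 1, d_i = P_i ! (len P_i - 1).\<close>
definition r_s :: "(nat \<Rightarrow> 'v \<Rightarrow> 'v \<Rightarrow> real) \<Rightarrow> 'v \<Rightarrow> 'v list \<Rightarrow> 'v list \<Rightarrow> nat \<Rightarrow> real" where
  "r_s p s P1 P2 t = p t s (P1 ! 1) / p t s (P2 ! 1)"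

definition r_d :: "(nat \<Rightarrow> 'v \<Rightarrow> 'v \<Rightarrow> real) \<Rightarrow> 'v \<Rightarrow> 'v list \<Rightarrow> 'v list \<Rightarrow> nat \<Rightarrow> real" where
  "r_d p d P1 P2 t = p t (P1 ! (length P1 - 2)) d / p t (P2 ! (length P2 - 2)) d"

definition r_min :: "(nat \<Rightarrow> 'v \<Rightarrow> 'v \<Rightarrow> real) \<Rightarrow> 'v \<Rightarrow> 'v \<Rightarrow> 'v list \<Rightarrow> 'v list \<Rightarrow> nat \<Rightarrow> real" where
  "r_min p s d P1 P2 t =
     (let L = max (length P1 - 1) (length P2 - 1) in
      Min ((\<lambda>i. r_s p s P1 P2 (t - i)) ` {..<L} \<union> (\<lambda>i. r_d p d P1 P2 (t - i)) ` {..<L}))"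

end

theory Submission
  imports Defs
begin

(* Interior vertices of a path have a single incoming and a single outgoing edge, so the
   backward flow reaching s along P_i at time t is the share of b_d that entered P_i at d
   exactly len(P_i) - 1 steps earlier: the shorter path P_1 receives the later, hence larger,
   input. The pheromone Q on the two edges leaving s satisfies
   Q(t+1) <= delta (Q(t) + 2 (f_s(t) + b_d(t))), so once delta^t p(0) <= f_s(0) + b_d(0), which
   is what t >= T_1 guarantees, Q(t) <= 4 (f_s(t) + b_d(t)) / (1 - delta). Finally r_ss1(t+1)
   is a ratio N / D of updated pheromones in which every pheromone ratio is at least
   r = r_min(t); this gives N - r D >= r (B_1 - B_2) / (1 + r), while (1 + r) D is at most
   the pheromone on the edges at s plus the inputs. *)

lemma path_edges_iff:
  "(a, c) \<in> path_edges P \<longleftrightarrow> (\<exists>i. Suc i < length P \<and> a = P ! i \<and> c = P ! Suc i)"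
proof
  assume "(a, c) \<in> path_edges P"
  then obtain i where "i < length P - 1" "a = P ! i" "c = P ! Suc i"
    unfolding path_edges_def set_zip by (auto simp: nth_tl)
  then show "\<exists>i. Suc i < length P \<and> a = P ! i \<and> c = P ! Suc i" by (intro exI[of _ i]) auto
next
  assume "\<exists>i. Suc i < length P \<and> a = P ! i \<and> c = P ! Suc i"
  then show "(a, c) \<in> path_edges P"
    unfolding path_edges_def set_zip by (fastforce simp: nth_tl)
qed

lemma path_edges_from_nth:
  assumes "distinct P" "k < length P"
  shows "(P ! k, z) \<in> path_edges P \<longleftrightarrow> Suc k < length P \<and> z = P ! Suc k"
  using assms by (auto simp: path_edges_iff nth_eq_iff_index_eq)

lemma path_edges_into_nth:
  assumes "distinct P" "k < length P"
  shows "(z, P ! k) \<in> path_edges P \<longleftrightarrow> 0 < k \<and> z = P ! (k - 1)"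
  using assms by (auto simp: path_edges_iff nth_eq_iff_index_eq gr0_conv_Suc)

lemma path_edges_in_set: "(a, c) \<in> path_edges P \<Longrightarrow> a \<in> set P \<and> c \<in> set P"
  by (auto simp: path_edges_iff)

lemma two_parallel_paths_sym:
  "two_parallel_paths E s d P1 P2 \<Longrightarrow> two_parallel_paths E s d P2 P1"
  unfolding two_parallel_paths_def by auto

lemma linear_recurrence_bound:
  fixes Q S :: "nat \<Rightarrow> real" and \<delta> :: real
  assumes "0 \<le> \<delta>" "\<delta> < 1" and step: "\<And>\<tau>. Q (Suc \<tau>) \<le> \<delta> * (Q \<tau> + S \<tau>)"
    and "mono S" "0 \<le> S 0"
  shows "Q \<tau> \<le> \<delta> ^ \<tau> * Q 0 + \<delta> * S \<tau> / (1 - \<delta>)"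
proof (induction \<tau>)
  case 0
  show ?case using assms by simp
next
  case (Suc \<tau>)
  have "Q (Suc \<tau>) \<le> \<delta> * (\<delta> ^ \<tau> * Q 0 + \<delta> * S \<tau> / (1 - \<delta>) + S \<tau>)"
    using step[of \<tau>] Suc.IH \<open>0 \<le> \<delta>\<close> by (smt (verit) mult_left_mono)
  also have "\<dots> = \<delta> ^ Suc \<tau> * Q 0 + \<delta> * S \<tau> / (1 - \<delta>)"
    using \<open>\<delta> < 1\<close> by (simp add: field_simps)
  also have "\<dots> \<le> \<delta> ^ Suc \<tau> * Q 0 + \<delta> * S (Suc \<tau>) / (1 - \<delta>)"
    using \<open>mono S\<close> assms(1,2) by (simp add: mono_def divide_right_mono mult_left_mono)
  finally show ?case .
qed

lemma power_mult_le_if_log_ratio_le: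
  fixes \<delta> x y :: real
  assumes "0 < \<delta>" "\<delta> < 1" "0 < x" "0 < y" and le: "ln (x / y) / ln (1 / \<delta>) \<le> real t"
  shows "\<delta> ^ t * x \<le> y"
proof -
  have "0 < ln (1 / \<delta>)" using assms by simp
  with le have "ln (x / y) \<le> ln ((1 / \<delta>) ^ t)"
    using assms by (simp add: pos_divide_le_eq ln_realpow mult.commute)
  then have "x / y \<le> (1 / \<delta>) ^ t" using assms by simp
  then show ?thesis using assms by (simp add: field_simps power_divide)
qed

lemma share_bounds:
  fixes X Y r :: real
  assumes "0 < X" "0 < Y" "0 \<le> r" "r * Y \<le> X"
  shows "r / (1 + r) \<le> X / (X + Y)" "Y / (X + Y) \<le> 1 / (1 + r)"
  using assms by (simp_all add: field_simps)

lemma ratio_gain_lower_bound: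
  fixes x y a w1 w2 B1 B2 r K :: real
  assumes "0 < y" "0 \<le> a" "0 < r" "r * y \<le> x"
    and "r / (1 + r) \<le> w1" "0 \<le> w2" "w2 \<le> 1 / (1 + r)"
    and "0 \<le> B2" "B2 \<le> B1" and K: "(x + y) * (1 + a) + B2 \<le> K"
  shows "r * (1 + (B1 - B2) / K) \<le> (x * (1 + a) + B1 * w1) / (y * (1 + a) + B2 * w2)"
proof -
  define D where "D = y * (1 + a) + B2 * w2"
  have "0 < D" unfolding D_def using assms by (simp add: add_pos_nonneg)
  have excess: "r * (B1 - B2) / (1 + r) \<le> x * (1 + a) + B1 * w1 - r * D"
  proof -
    have "r * (B1 - B2) / (1 + r) = B1 * (r / (1 + r)) - r * (B2 * (1 / (1 + r)))"
      by (simp add: diff_divide_distrib right_diff_distrib mult.commute)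
    also have "\<dots> \<le> (x - r * y) * (1 + a) + B1 * w1 - r * (B2 * w2)"
    proof -
      have "0 \<le> (x - r * y) * (1 + a)" using assms by simp
      moreover have "B1 * (r / (1 + r)) \<le> B1 * w1" using assms by (intro mult_left_mono) auto
      moreover have "r * (B2 * w2) \<le> r * (B2 * (1 / (1 + r)))"
        using assms by (intro mult_left_mono) auto
      ultimately show ?thesis by linarith
    qed
    also have "\<dots> = x * (1 + a) + B1 * w1 - r * D" unfolding D_def by (simp add: algebra_simps)
    finally show ?thesis .
  qed
  have "(1 + r) * D \<le> K"
  proof -
    have "(1 + r) * y \<le> x + y" using assms by (simp add: algebra_simps)
    then have "(1 + r) * y * (1 + a) \<le> (x + y) * (1 + a)" using assms by (simp add: mult_right_mono)
    moreover have "(1 + r) * w2 \<le> 1" using assms by (simp add: field_simps)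
    then have "(1 + r) * w2 * B2 \<le> B2" using assms by (simp add: mult_left_le_one_le)
    ultimately show ?thesis unfolding D_def using K by (simp add: algebra_simps)
  qed
  have "r * (B1 - B2) / K \<le> r * (B1 - B2) / ((1 + r) * D)"
  proof -
    have "0 < (1 + r) * D" using \<open>0 < D\<close> assms by simp
    moreover have "0 < K" using calculation \<open>(1 + r) * D \<le> K\<close> by linarith
    ultimately show ?thesis using \<open>(1 + r) * D \<le> K\<close> \<open>0 < D\<close> assms
      by (intro divide_left_mono mult_pos_pos) auto
  qed
  also have "\<dots> \<le> (x * (1 + a) + B1 * w1 - r * D) / D"
    using excess \<open>0 < D\<close> assms by (simp add: divide_right_mono flip: divide_divide_eq_left)
  finally show ?thesis using \<open>0 < D\<close> unfolding D_def by (simp add: field_simps)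
qed

lemma r_min_le:
  assumes "i < max (length P1 - 1) (length P2 - 1)"
  shows "r_min p s d P1 P2 t \<le> r_s p s P1 P2 (t - i)" "r_min p s d P1 P2 t \<le> r_d p d P1 P2 (t - i)"
  using assms unfolding r_min_def Let_def by (auto intro!: Min_le)

lemma fflow_bounds:
  assumes "finite E" "(u, v) \<in> E" "\<And>z. (u, z) \<in> E \<Longrightarrow> 0 < p t u z" "0 \<le> f t u"
  shows "0 \<le> fflow E p f t u v" "fflow E p f t u v \<le> f t u"
proof -
  let ?out = "\<Sum>z\<in>{z. (u, z) \<in> E}. p t u z"
  have "finite {z. (u, z) \<in> E}"
    using finite_imageI[OF assms(1), of snd] by (rule finite_subset[rotated]) force
  then have "p t u v \<le> ?out"
    using assms by (intro member_le_sum) (auto intro: less_imp_le)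
  moreover have "0 < p t u v" using assms by simp
  ultimately have "0 \<le> p t u v / ?out" "p t u v / ?out \<le> 1" by simp_all
  then show "0 \<le> fflow E p f t u v" "fflow E p f t u v \<le> f t u"
    unfolding fflow_def using assms(4) by (simp_all add: mult_left_le flip: times_divide_eq_right)
qed

lemma bflow_bounds:
  assumes "finite E" "(u, v) \<in> E" "\<And>z. (z, v) \<in> E \<Longrightarrow> 0 < p t z v" "0 \<le> b t v"
  shows "0 \<le> bflow E p b t u v" "bflow E p b t u v \<le> b t v"
proof -
  let ?into = "\<Sum>z\<in>{z. (z, v) \<in> E}. p t z v"
  have "finite {z. (z, v) \<in> E}"
    using finite_imageI[OF assms(1), of fst] by (rule finite_subset[rotated]) force
  then have "p t u v \<le> ?into"
    using assms by (intro member_le_sum) (auto intro: less_imp_le)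
  moreover have "0 < p t u v" using assms by simp
  ultimately have "0 \<le> p t u v / ?into" "p t u v / ?into \<le> 1" by simp_all
  then show "0 \<le> bflow E p b t u v" "bflow E p b t u v \<le> b t v"
    unfolding bflow_def using assms(4) by (simp_all add: mult_left_le flip: times_divide_eq_right)
qed

lemma bflow_single_in_edge:
  assumes "{z. (z, v) \<in> E} = {u}" "p t u v \<noteq> 0"
  shows "bflow E p b t u v = b t v"
  using assms unfolding bflow_def by simp

locale parallel_paths =
  fixes E :: "('v \<times> 'v) set" and s d :: 'v and P1 P2 :: "'v list"
  assumes parallel: "two_parallel_paths E s d P1 P2"
begin

lemma distinct_P1: "distinct P1" and source_ne_target: "s \<noteq> d"
  and E_eq: "E = path_edges P1 \<union> path_edges P2" and inter_eq: "set P1 \<inter> set P2 = {s, d}"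
  using parallel unfolding two_parallel_paths_def by auto

lemma P1_first: "P1 ! 0 = s" and P1_last: "P1 ! (length P1 - 1) = d"
  using parallel unfolding two_parallel_paths_def by (auto simp: hd_conv_nth last_conv_nth)

lemma length_P1: "2 \<le> length P1"
proof -
  have "length P1 - 1 \<noteq> 0" using P1_first P1_last source_ne_target by auto
  then show ?thesis by simp
qed

lemma finite_E: "finite E"
  unfolding E_eq path_edges_def by simp

lemma interior_not_in_P2:
  assumes "0 < k" "Suc k < length P1"
  shows "P1 ! k \<notin> set P2"
proof
  assume "P1 ! k \<in> set P2"
  moreover have "P1 ! k \<in> set P1" using assms by simp
  ultimately have "P1 ! k \<in> {P1 ! 0, P1 ! (length P1 - 1)}"
    using inter_eq P1_first P1_last by blast
  moreover have "k < length P1" "0 < length P1" "length P1 - 1 < length P1" using assms by auto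
  ultimately show False using assms distinct_P1 by (auto simp: nth_eq_iff_index_eq)
qed

lemma out_edges_interior:
  assumes "0 < k" "Suc k < length P1"
  shows "{z. (P1 ! k, z) \<in> E} = {P1 ! Suc k}"
  using assms interior_not_in_P2[OF assms]
  by (auto simp: E_eq path_edges_from_nth[OF distinct_P1] dest: path_edges_in_set)

lemma in_edges_interior:
  assumes "0 < k" "Suc k < length P1"
  shows "{z. (z, P1 ! k) \<in> E} = {P1 ! (k - 1)}"
  using assms interior_not_in_P2[OF assms]
  by (auto simp: E_eq path_edges_into_nth[OF distinct_P1] dest: path_edges_in_set)

lemma P1_edge_endpoints:
  assumes "(u, v) \<in> path_edges P1"
  shows "u \<noteq> d" "v \<noteq> s"
proof -
  obtain i where i: "Suc i < length P1" "u = P1 ! i" "v = P1 ! Suc i"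
    using assms by (auto simp: path_edges_iff)
  have "i < length P1" "0 < length P1" "length P1 - 1 < length P1" using i(1) by auto
  then show "u \<noteq> d" "v \<noteq> s"
    using i P1_first P1_last by (auto simp: nth_eq_iff_index_eq[OF distinct_P1])
qed

lemma P1_edge_head_out_edges:
  assumes "(u, v) \<in> path_edges P1" "v \<noteq> d"
  shows "\<exists>w. {z. (v, z) \<in> E} = {w}"
proof -
  obtain i where i: "Suc i < length P1" "v = P1 ! Suc i"
    using assms(1) by (auto simp: path_edges_iff)
  with assms(2) P1_last have "Suc (Suc i) < length P1"
    by (metis Suc_lessI diff_Suc_1)
  then show ?thesis using out_edges_interior[of "Suc i"] i by auto
qed

end

sublocale parallel_paths \<subseteq> swapped: parallel_paths E s d P2 P1
  by unfold_locales (rule two_parallel_paths_sym[OF parallel])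

context parallel_paths
begin

lemma out_edges_source: "{z. (s, z) \<in> E} = {P1 ! 1, P2 ! 1}"
proof -
  have "(s, z) \<in> path_edges P \<longleftrightarrow> z = P ! 1"
    if "distinct P" "2 \<le> length P" "P ! 0 = s" for P :: "'v list" and z
  proof -
    have nonempty: "0 < length P" using that(2) by linarith
    show ?thesis using path_edges_from_nth[OF that(1) nonempty, of z] that by auto
  qed
  then show ?thesis
    using distinct_P1 swapped.distinct_P1 length_P1 swapped.length_P1 P1_first swapped.P1_first
    by (auto simp: E_eq)
qed

lemma in_edges_target: "{z. (z, d) \<in> E} = {P1 ! (length P1 - 2), P2 ! (length P2 - 2)}"
proof -
  have "(z, d) \<in> path_edges P \<longleftrightarrow> z = P ! (length P - 2)"
    if "distinct P" "2 \<le> length P" "P ! (length P - 1) = d" for P :: "'v list" and z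
  proof -
    have last: "length P - 1 < length P" "0 < length P - 1" "length P - 1 - 1 = length P - 2"
      using that(2) by auto
    show ?thesis using path_edges_into_nth[OF that(1) last(1), of z] last that(3) by simp
  qed
  then show ?thesis
    using distinct_P1 swapped.distinct_P1 length_P1 swapped.length_P1 P1_last swapped.P1_last
    by (auto simp: E_eq)
qed

lemma terminal_edges:
  "(s, P1 ! 1) \<in> E" "(s, P2 ! 1) \<in> E"
  "(P1 ! (length P1 - 2), d) \<in> E" "(P2 ! (length P2 - 2), d) \<in> E"
  using out_edges_source in_edges_target by auto

lemma edge_not_from_target: "(u, v) \<in> E \<Longrightarrow> u \<noteq> d"
  and edge_not_into_source: "(u, v) \<in> E \<Longrightarrow> v \<noteq> s"
  using P1_edge_endpoints swapped.P1_edge_endpoints unfolding E_eq by blast+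

lemma edge_tail_interior:
  "(u, v) \<in> E \<Longrightarrow> u \<noteq> s \<Longrightarrow> u \<in> set P1 \<union> set P2 - {s, d}"
  and edge_head_interior:
  "(u, v) \<in> E \<Longrightarrow> v \<noteq> d \<Longrightarrow> v \<in> set P1 \<union> set P2 - {s, d}"
  using edge_not_from_target edge_not_into_source
  by (auto simp: E_eq dest: path_edges_in_set)

lemma edge_head_out_edges: "(u, v) \<in> E \<Longrightarrow> v \<noteq> d \<Longrightarrow> \<exists>w. {z. (v, z) \<in> E} = {w}"
  using P1_edge_head_out_edges swapped.P1_edge_head_out_edges unfolding E_eq by blast

lemma second_vertices_differ:
  assumes "length P1 \<noteq> length P2"
  shows "P1 ! 1 \<noteq> P2 ! 1 \<and> P1 ! (length P1 - 2) \<noteq> P2 ! (length P2 - 2)"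
proof -
  have in_sets: "P1 ! 1 \<in> set P1" "P1 ! (length P1 - 2) \<in> set P1"
    "P2 ! 1 \<in> set P2" "P2 ! (length P2 - 2) \<in> set P2"
    using length_P1 swapped.length_P1 by auto
  consider "2 < length P1" | "2 < length P2" using assms length_P1 swapped.length_P1 by linarith
  then show ?thesis
  proof cases
    case 1
    then have "P1 ! 1 \<notin> set P2" "P1 ! (length P1 - 2) \<notin> set P2"
      using interior_not_in_P2 by auto
    then show ?thesis using in_sets by metis
  next
    case 2
    then have "P2 ! 1 \<notin> set P1" "P2 ! (length P2 - 2) \<notin> set P1"
      using swapped.interior_not_in_P2 by auto
    then show ?thesis using in_sets by metis
  qed
qed

end

locale ant_colony = parallel_paths E s d P1 P2
  for E :: "('v \<times> 'v) set" and s d :: 'v and P1 P2 :: "'v list" +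
  fixes \<delta> :: real and f b :: "nat \<Rightarrow> 'v \<Rightarrow> real" and p :: "nat \<Rightarrow> 'v \<Rightarrow> 'v \<Rightarrow> real"
  assumes delta: "0 < \<delta>" "\<delta> < 1"
    and f_step: "v \<noteq> s \<Longrightarrow> f (Suc t) v = (\<Sum>z\<in>{z. (z, v) \<in> E}. fflow E p f t z v)"
    and b_step: "u \<noteq> d \<Longrightarrow> b (Suc t) u = (\<Sum>z\<in>{z. (u, z) \<in> E}. bflow E p b t u z)"
    and p_step: "(u, v) \<in> E \<Longrightarrow>
      p (Suc t) u v = \<delta> * (p t u v + fflow E p f t u v + bflow E p b t u v)"
    and p_init_pos: "(u, v) \<in> E \<Longrightarrow> 0 < p 0 u v"
    and f_source_pos: "0 < f t s" and f_source_mono: "mono (\<lambda>t. f t s)"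
    and b_target_pos: "0 < b t d" and b_target_mono: "mono (\<lambda>t. b t d)"
    and f_init_nonneg: "v \<in> set P1 \<union> set P2 - {s, d} \<Longrightarrow> 0 \<le> f 0 v"
    and b_init_bounds: "v \<in> set P1 \<union> set P2 - {s, d} \<Longrightarrow> 0 \<le> b 0 v \<and> b 0 v \<le> b 0 d"
begin

lemma flow_invariant:
  "\<forall>(u, v) \<in> E. 0 < p t u v \<and> 0 \<le> f t u \<and> 0 \<le> b t v \<and> b t v \<le> b t d"
proof (induction t)
  case 0
  have "0 \<le> f 0 u" if "(u, v) \<in> E" for u v
    using that f_source_pos[of 0] f_init_nonneg edge_tail_interior by (cases "u = s") auto
  moreover have "0 \<le> b 0 v \<and> b 0 v \<le> b 0 d" if "(u, v) \<in> E" for u v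
    using that b_target_pos[of 0] b_init_bounds edge_head_interior by (cases "v = d") auto
  ultimately show ?case using p_init_pos by blast
next
  case (Suc t)
  have p_pos: "\<And>u v. (u, v) \<in> E \<Longrightarrow> 0 < p t u v" using Suc.IH by blast
  have fflow: "0 \<le> fflow E p f t u v" if "(u, v) \<in> E" for u v
    by (rule fflow_bounds(1)[OF finite_E that]) (use p_pos Suc.IH that in auto)
  have bflow: "0 \<le> bflow E p b t u v \<and> bflow E p b t u v \<le> b t d" if "(u, v) \<in> E" for u v
  proof -
    have "0 \<le> b t v \<and> b t v \<le> b t d" using Suc.IH that by auto
    then show ?thesis using bflow_bounds[OF finite_E that, of p t b] p_pos by auto
  qed
  have "0 < p (Suc t) u v" if "(u, v) \<in> E" for u v
    using p_step[OF that] p_pos[OF that] fflow[OF that] bflow[OF that] delta by simp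
  moreover have "0 \<le> f (Suc t) u" if "(u, v) \<in> E" for u v
  proof (cases "u = s")
    case False
    then show ?thesis using f_step[of u t] fflow by (auto intro: sum_nonneg)
  qed (use f_source_pos in \<open>simp add: less_imp_le\<close>)
  moreover have "0 \<le> b (Suc t) v \<and> b (Suc t) v \<le> b (Suc t) d" if e: "(u, v) \<in> E" for u v
  proof (cases "v = d")
    case False
    then obtain w where w: "{z. (v, z) \<in> E} = {w}" using edge_head_out_edges[OF e] by blast
    then have "b (Suc t) v = bflow E p b t v w" using b_step[OF False] by simp
    moreover have "b t d \<le> b (Suc t) d" using b_target_mono by (simp add: mono_def)
    moreover have "(v, w) \<in> E" using w by blast
    ultimately show ?thesis using bflow[of v w] by auto
  qed (use b_target_pos in \<open>simp add: less_imp_le\<close>)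
  ultimately show ?case by blast
qed

lemma pheromone_pos: "(u, v) \<in> E \<Longrightarrow> 0 < p t u v"
  using flow_invariant by blast

lemma fflow_le_source: "(s, v) \<in> E \<Longrightarrow> fflow E p f t s v \<le> f t s"
  using fflow_bounds(2)[OF finite_E, of s v p t f] pheromone_pos f_source_pos[of t] by simp

lemma bflow_le_target: "(u, v) \<in> E \<Longrightarrow> bflow E p b t u v \<le> b t d"
  using bflow_bounds(2)[OF finite_E, of u v p t b] pheromone_pos flow_invariant[of t] by fastforce

lemma bflow_Suc_interior:
  assumes "0 < k" "Suc k < length P1"
  shows "bflow E p b (Suc t) (P1 ! (k - 1)) (P1 ! k) = bflow E p b t (P1 ! k) (P1 ! Suc k)"
proof -
  have "P1 ! k \<noteq> d" using edge_not_from_target out_edges_interior[OF assms] by blast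
  have "(P1 ! (k - 1), P1 ! k) \<in> E" using in_edges_interior[OF assms] by blast
  then have "p (Suc t) (P1 ! (k - 1)) (P1 ! k) \<noteq> 0" using pheromone_pos less_imp_neq by metis
  then have "bflow E p b (Suc t) (P1 ! (k - 1)) (P1 ! k) = b (Suc t) (P1 ! k)"
    by (rule bflow_single_in_edge[OF in_edges_interior[OF assms]])
  also have "\<dots> = bflow E p b t (P1 ! k) (P1 ! Suc k)"
    using b_step[OF \<open>P1 ! k \<noteq> d\<close>] out_edges_interior[OF assms] by simp
  finally show ?thesis .
qed

lemma bflow_delay:
  assumes "j \<le> length P1 - 2" "j \<le> t"
  shows "bflow E p b t (P1 ! (length P1 - 2 - j)) (P1 ! (length P1 - 1 - j))
    = bflow E p b (t - j) (P1 ! (length P1 - 2)) d"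
  using assms
proof (induction j arbitrary: t)
  case 0
  then show ?case using P1_last by simp
next
  case (Suc j)
  then obtain t' where t: "t = Suc t'" by (cases t) auto
  define k where "k = length P1 - 2 - j"
  have "0 < k" "Suc k < length P1" "length P1 - 2 - Suc j = k - 1" "length P1 - 1 - Suc j = k"
    "length P1 - 1 - j = Suc k"
    using Suc.prems length_P1 unfolding k_def by auto
  then show ?case using bflow_Suc_interior[of k t'] Suc.IH[of t'] Suc.prems t k_def by simp
qed

lemma bflow_into_source:
  assumes "length P1 - 2 \<le> t"
  shows "bflow E p b t s (P1 ! 1) = bflow E p b (t - (length P1 - 2)) (P1 ! (length P1 - 2)) d"
proof -
  have "length P1 - 1 - (length P1 - 2) = 1" using length_P1 by simp
  then show ?thesis using bflow_delay[of "length P1 - 2" t] assms P1_first by simp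
qed

lemma fflow_from_source:
  assumes "length P1 \<noteq> length P2"
  shows "fflow E p f t s (P1 ! 1) = f t s * p t s (P1 ! 1) / (p t s (P1 ! 1) + p t s (P2 ! 1))"
  using second_vertices_differ[OF assms] unfolding fflow_def out_edges_source by simp

lemma bflow_into_target:
  assumes "length P1 \<noteq> length P2"
  shows "bflow E p b t (P1 ! (length P1 - 2)) d
    = b t d * p t (P1 ! (length P1 - 2)) d / (p t (P1 ! (length P1 - 2)) d + p t (P2 ! (length P2 - 2)) d)"
  using second_vertices_differ[OF assms] unfolding bflow_def in_edges_target by simp

lemma source_pheromone_step:
  assumes "length P1 \<noteq> length P2" "length P1 - 2 \<le> t"
  defines "\<tau> \<equiv> t - (length P1 - 2)"
  shows "p (Suc t) s (P1 ! 1) = \<delta> * (p t s (P1 ! 1) * (1 + f t s / (p t s (P1 ! 1) + p t s (P2 ! 1)))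
    + b \<tau> d * (p \<tau> (P1 ! (length P1 - 2)) d
      / (p \<tau> (P1 ! (length P1 - 2)) d + p \<tau> (P2 ! (length P2 - 2)) d)))"
  using p_step[OF terminal_edges(1)] fflow_from_source[OF assms(1)] bflow_into_source[OF assms(2)]
    bflow_into_target[OF assms(1)]
  unfolding \<tau>_def by (simp add: algebra_simps)

end

sublocale ant_colony \<subseteq> swapped: ant_colony E s d P2 P1
  by unfold_locales (use delta f_step b_step p_step p_init_pos f_source_pos f_source_mono
    b_target_pos b_target_mono f_init_nonneg b_init_bounds in \<open>auto simp: Un_commute\<close>)

context ant_colony
begin

lemma source_pheromone_bound:
  assumes "\<And>v. (s, v) \<in> E \<Longrightarrow> \<delta> ^ t * p 0 s v \<le> f 0 s + b 0 d"
  shows "p t s (P1 ! 1) + p t s (P2 ! 1) \<le> 4 * (f t s + b t d) / (1 - \<delta>)"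
proof -
  define Q where "Q \<tau> = p \<tau> s (P1 ! 1) + p \<tau> s (P2 ! 1)" for \<tau>
  define S where "S \<tau> = 2 * (f \<tau> s + b \<tau> d)" for \<tau>
  have "mono S"
    using f_source_mono b_target_mono unfolding S_def mono_def by (simp add: add_mono)
  have "0 \<le> S 0" unfolding S_def using f_source_pos[of 0] b_target_pos[of 0] by simp
  have "Q (Suc \<tau>) \<le> \<delta> * (Q \<tau> + S \<tau>)" for \<tau>
  proof -
    have "Q (Suc \<tau>) = \<delta> * (Q \<tau> + (fflow E p f \<tau> s (P1 ! 1) + fflow E p f \<tau> s (P2 ! 1))
        + (bflow E p b \<tau> s (P1 ! 1) + bflow E p b \<tau> s (P2 ! 1)))"
      unfolding Q_def using p_step[OF terminal_edges(1)] p_step[OF terminal_edges(2)] by (simp add: algebra_simps)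
    also have "\<dots> \<le> \<delta> * (Q \<tau> + S \<tau>)"
      unfolding S_def using fflow_le_source[OF terminal_edges(1), of \<tau>] fflow_le_source[OF terminal_edges(2), of \<tau>]
        bflow_le_target[OF terminal_edges(1), of \<tau>] bflow_le_target[OF terminal_edges(2), of \<tau>] delta
      by (intro mult_left_mono) auto
    finally show ?thesis .
  qed
  then have "Q t \<le> \<delta> ^ t * Q 0 + \<delta> * S t / (1 - \<delta>)"
    using linear_recurrence_bound delta \<open>mono S\<close> \<open>0 \<le> S 0\<close> by simp
  also have "\<dots> \<le> S 0 + S t / (1 - \<delta>)"
  proof -
    have "\<delta> ^ t * Q 0 \<le> S 0"
      unfolding Q_def S_def using assms[OF terminal_edges(1)] assms[OF terminal_edges(2)] by (simp add: algebra_simps)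
    moreover have "\<delta> * S t \<le> S t" using \<open>mono S\<close> \<open>0 \<le> S 0\<close> delta
      by (simp add: mono_def mult_left_le_one_le order_trans[of 0 "S 0"])
    ultimately show ?thesis using delta by (intro add_mono divide_right_mono) auto
  qed
  also have "\<dots> \<le> 2 * S t / (1 - \<delta>)"
  proof -
    have "S 0 \<le> S t" using \<open>mono S\<close> by (simp add: mono_def)
    also have "\<dots> \<le> S t / (1 - \<delta>)"
      using \<open>0 \<le> S 0\<close> \<open>S 0 \<le> S t\<close> delta by (simp add: le_divide_eq mult_left_le)
    finally show ?thesis by simp
  qed
  finally show ?thesis unfolding Q_def S_def by simp
qed

lemma r_min_mult_le:
  assumes "k < max (length P1 - 1) (length P2 - 1)"
  shows "r_min p s d P1 P2 t * p (t - k) s (P2 ! 1) \<le> p (t - k) s (P1 ! 1)"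
    "r_min p s d P1 P2 t * p (t - k) (P2 ! (length P2 - 2)) d \<le> p (t - k) (P1 ! (length P1 - 2)) d"
proof -
  have "0 < p (t - k) s (P2 ! 1)" "0 < p (t - k) (P2 ! (length P2 - 2)) d"
    using terminal_edges pheromone_pos by auto
  then show "r_min p s d P1 P2 t * p (t - k) s (P2 ! 1) \<le> p (t - k) s (P1 ! 1)"
    "r_min p s d P1 P2 t * p (t - k) (P2 ! (length P2 - 2)) d \<le> p (t - k) (P1 ! (length P1 - 2)) d"
    using r_min_le[OF assms, of p s d t] unfolding r_s_def r_d_def by (simp_all add: le_divide_eq)
qed

lemma r_min_pos: "0 < r_min p s d P1 P2 t"
proof -
  have "0 < length P1 - 1" using length_P1 by simp
  then show ?thesis
    unfolding r_min_def Let_def using terminal_edges[THEN pheromone_pos]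
    by (subst Min_gr_iff) (auto simp: r_s_def r_d_def lessThan_empty_iff)
qed

lemma source_ratio_gain:
  assumes lengths: "length P1 < length P2" and t: "length P2 - 2 \<le> t"
    and Q: "p t s (P1 ! 1) + p t s (P2 ! 1) \<le> 4 * (f t s + b t d) / (1 - \<delta>)"
  shows "r_min p s d P1 P2 t * (1 + (1 - \<delta>) * (b (t + 1 - (length P1 - 1)) d
      - b (t + 1 - (length P2 - 1)) d) / (6 * (f t s + b t d))) \<le> r_s p s P1 P2 (t + 1)"
proof -
  define t1 t2 where "t1 = t - (length P1 - 2)" and "t2 = t - (length P2 - 2)"
  define x y where "x = p t s (P1 ! 1)" and "y = p t s (P2 ! 1)"
  define X1 Y1 where "X1 = p t1 (P1 ! (length P1 - 2)) d" and "Y1 = p t1 (P2 ! (length P2 - 2)) d"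
  define X2 Y2 where "X2 = p t2 (P1 ! (length P1 - 2)) d" and "Y2 = p t2 (P2 ! (length P2 - 2)) d"
  define a where "a = f t s / (x + y)"
  define S where "S = f t s + b t d"
  define r where "r = r_min p s d P1 P2 t"
  have t_P1: "length P1 - 2 \<le> t" using lengths t by linarith
  have ratio: "r_s p s P1 P2 (t + 1)
      = (x * (1 + a) + b t1 d * (X1 / (X1 + Y1))) / (y * (1 + a) + b t2 d * (Y2 / (X2 + Y2)))"
    using source_pheromone_step[OF _ t_P1] swapped.source_pheromone_step[OF _ t] lengths delta
    unfolding r_s_def x_def y_def a_def X1_def Y1_def X2_def Y2_def t1_def t2_def
    by (simp add: add.commute)
  have "0 < x" "0 < y" "0 < X1" "0 < Y1" "0 < X2" "0 < Y2"
    using terminal_edges pheromone_pos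
    unfolding x_def y_def X1_def Y1_def X2_def Y2_def by auto
  moreover have "r * y \<le> x" "r * Y1 \<le> X1" "r * Y2 \<le> X2"
    using r_min_mult_le[of 0] r_min_mult_le[of "length P1 - 2"] r_min_mult_le[of "length P2 - 2"]
      lengths length_P1
    unfolding r_def x_def y_def X1_def Y1_def X2_def Y2_def t1_def t2_def by auto
  moreover have "b t2 d \<le> b t1 d" "b t2 d \<le> b t d"
    using b_target_mono lengths unfolding t1_def t2_def mono_def by auto
  moreover have "(x + y) * (1 + a) + b t2 d \<le> 6 * S / (1 - \<delta>)"
  proof -
    have "0 < S" using f_source_pos[of t] b_target_pos[of t] unfolding S_def by simp
    have "(x + y) * (1 + a) + b t2 d = (x + y) + (f t s + b t2 d)"
      using pheromone_pos[OF terminal_edges(1), of t] pheromone_pos[OF terminal_edges(2), of t]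
      unfolding a_def x_def y_def
      by (simp add: field_simps add_pos_pos)
    also have "\<dots> \<le> 4 * S / (1 - \<delta>) + S / (1 - \<delta>)"
    proof (rule add_mono)
      show "x + y \<le> 4 * S / (1 - \<delta>)" using Q unfolding x_def y_def S_def .
      have "f t s + b t2 d \<le> S" using \<open>b t2 d \<le> b t d\<close> unfolding S_def by simp
      also have "S \<le> S / (1 - \<delta>)" using \<open>0 < S\<close> delta by (simp add: le_divide_eq mult_left_le)
      finally show "f t s + b t2 d \<le> S / (1 - \<delta>)" .
    qed
    also have "\<dots> \<le> 6 * S / (1 - \<delta>)"
      using \<open>0 < S\<close> delta by (simp add: divide_right_mono flip: add_divide_distrib)
    finally show ?thesis .
  qed
  ultimately have "r * (1 + (b t1 d - b t2 d) / (6 * S / (1 - \<delta>))) \<le> r_s p s P1 P2 (t + 1)"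
    using r_min_pos share_bounds b_target_pos f_source_pos unfolding ratio r_def
    by (intro ratio_gain_lower_bound) (auto simp: a_def less_imp_le)
  moreover have "t1 = t + 1 - (length P1 - 1)" "t2 = t + 1 - (length P2 - 1)"
    using lengths t length_P1 unfolding t1_def t2_def by auto
  ultimately show ?thesis unfolding r_def S_def by (simp add: mult.commute)
qed

end

theorem mainTheorem13:
  fixes E :: "('v \<times> 'v) set" and s d :: 'v and P1 P2 :: "'v list"
    and l :: "'v \<Rightarrow> real" and \<delta> :: real
    and f b :: "nat \<Rightarrow> 'v \<Rightarrow> real" and p :: "nat \<Rightarrow> 'v \<Rightarrow> 'v \<Rightarrow> real"
    and m n L :: nat and T1 :: real and t :: nat
  assumes G: "two_parallel_paths E s d P1 P2"
    and m_def: "m = length P1 - 1" and n_def: "n = length P2 - 1" and L_def: "L = max m n"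
    and mn: "m < n"
    and delta: "0 < \<delta>" "\<delta> < 1"
    and leak: "\<forall>v. l v = 0"
    and dyn: "ant_dynamics E s d l \<delta> f b p"
    and p0: "\<forall>(u,v)\<in>E. p 0 u v > 0"
    and fs_pos: "\<forall>t. f t s > 0" and fs_mono: "mono (\<lambda>t. f t s)"
    and bd_pos: "\<forall>t. b t d > 0" and bd_mono: "mono (\<lambda>t. b t d)"
    and f0: "\<forall>v \<in> (set P1 \<union> set P2) - {s, d}. 0 \<le> f 0 v \<and> f 0 v \<le> f 0 s"
    and b0: "\<forall>v \<in> (set P1 \<union> set P2) - {s, d}. 0 \<le> b 0 v \<and> b 0 v \<le> b 0 d"
    and T1_def: "T1 = Max ((\<lambda>(u,v). ln (p 0 u v / (f 0 s + b 0 d)) / ln (1 / \<delta>)) ` E)"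
    and t_ge: "real t \<ge> real L + max 0 T1"
  shows "r_s p s P1 P2 (t + 1) \<ge>
           r_min p s d P1 P2 t *
             (1 + (1 - \<delta>) * (b (t + 1 - m) d - b (t + 1 - n) d) / (6 * (f t s + b t d)))"
proof -
  interpret ant_colony E s d P1 P2 \<delta> f b p
    using G delta dyn leak p0 fs_pos fs_mono bd_pos bd_mono f0 b0
    by unfold_locales (auto simp: ant_dynamics_def)
  have lengths: "length P1 < length P2" "length P2 - 2 \<le> t"
    using mn t_ge length_P1 unfolding m_def n_def L_def by auto
  have "\<delta> ^ t * p 0 s v \<le> f 0 s + b 0 d" if "(s, v) \<in> E" for v
  proof (rule power_mult_le_if_log_ratio_le)
    have "ln (p 0 s v / (f 0 s + b 0 d)) / ln (1 / \<delta>) \<le> T1"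
      unfolding T1_def using finite_E that by (intro Max_ge) auto
    then show "ln (p 0 s v / (f 0 s + b 0 d)) / ln (1 / \<delta>) \<le> real t" using t_ge by simp
  qed (use delta pheromone_pos that fs_pos bd_pos in \<open>auto intro: add_pos_pos\<close>)
  then show ?thesis
    using source_ratio_gain[OF lengths source_pheromone_bound] unfolding m_def n_def by simp
qed

end
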